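(* Let $n\ge2$ and let $(x_j)_{j\in J}$ be a finite frame of $\mathbb C^n$. Suppose that $x,y\in\mathbb C^n$ are linearly independent and that $\langle x,x_j\rangle$ and $\langle y,x_j\rangle$ are real for all $j\in J$. Then there exists $z\in\operatorname{span}\{x,y\}$ such that $(x_j)_{j\in J}$ does not do stable phase retrieval near $z$.
   Context: A finite frame $(x_j)_{j\in J}$ of $\mathbb C^n$ satisfies $A\|x\|^2\le\sum_{j}|\langle x,x_j\rangle|^2\le B\|x\|^2$ for some $B\ge A>0$; its analysis operator is $\Theta(x)=(\langle x,x_j\rangle)_{j\in J}$ and $|\Theta x|=(|\langle x,x_j\rangle|)_{j\in J}$. For $x,y$ with $x\neq\lambda y$ for all $|\lambda|=1$, set $\Psi(x,y)=\||\Theta x|-|\Theta y|\|/\min_{|\lambda|=1}\|x-\lambda y\|$. For $C>0$, the frame does $C$-stable phase retrieval near $z$ if $\liminf_{w\to z,\ w\notin\{\lambda z:|\lambda|=1\}} C\,\Psi(z,w)\ge1$, and does stable phase retrieval near $z$ if this holds for some $C>0$. *)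

theory Defs
  imports "HOL-Analysis.Analysis"
begin

definition cinner :: "complex ^ 'n \<Rightarrow> complex ^ 'n \<Rightarrow> complex" where
  "cinner x y = (\<Sum>i\<in>UNIV. x $ i * cnj (y $ i))"

definition finite_frame :: "'j set \<Rightarrow> ('j \<Rightarrow> complex ^ 'n) \<Rightarrow> bool" where
  "finite_frame J X \<longleftrightarrow> finite J \<and>
     (\<exists>A B. 0 < A \<and> A \<le> B \<and>
        (\<forall>x. A * (norm x)\<^sup>2 \<le> (\<Sum>j\<in>J. (cmod (cinner x (X j)))\<^sup>2) \<and>
             (\<Sum>j\<in>J. (cmod (cinner x (X j)))\<^sup>2) \<le> B * (norm x)\<^sup>2))"

definition Psi :: "'j set \<Rightarrow> ('j \<Rightarrow> complex ^ 'n) \<Rightarrow> complex ^ 'n \<Rightarrow> complex ^ 'n \<Rightarrow> real" where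
  "Psi J X x y =
     sqrt (\<Sum>j\<in>J. (cmod (cinner x (X j)) - cmod (cinner y (X j)))\<^sup>2)
     / Inf {norm (x - u *s y) | u. cmod u = 1}"

definition C_stable_pr_near :: "'j set \<Rightarrow> ('j \<Rightarrow> complex ^ 'n) \<Rightarrow> real \<Rightarrow> complex ^ 'n \<Rightarrow> bool" where
  "C_stable_pr_near J X C z \<longleftrightarrow>
     Liminf (at z within - {u *s z | u. cmod u = 1}) (\<lambda>w. ereal (C * Psi J X z w)) \<ge> 1"

definition stable_pr_near :: "'j set \<Rightarrow> ('j \<Rightarrow> complex ^ 'n) \<Rightarrow> complex ^ 'n \<Rightarrow> bool" where
  "stable_pr_near J X z \<longleftrightarrow> (\<exists>C>0. C_stable_pr_near J X C z)"

end

theory Submission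
  imports Defs
begin

text \<open>Pick a real \<open>s\<close> such that \<open>z = x + s y\<close> satisfies \<open>\<langle>z,x\<^sub>j\<rangle> \<noteq> 0\<close> whenever
  \<open>\<langle>y,x\<^sub>j\<rangle> \<noteq> 0\<close>, and perturb \<open>z\<close> in the imaginary direction: \<open>w\<^sub>t = z + i t y\<close>.
  Since all these coefficients are real, \<open>|\<langle>w\<^sub>t,x\<^sub>j\<rangle>| = sqrt (\<langle>z,x\<^sub>j\<rangle>\<^sup>2 + t\<^sup>2 \<langle>y,x\<^sub>j\<rangle>\<^sup>2)\<close>
  differs from \<open>|\<langle>z,x\<^sub>j\<rangle>|\<close> only by \<open>O(t\<^sup>2)\<close>. On the other hand \<open>z - \<lambda> w\<^sub>t\<close> is
  \<open>-\<lambda> i t\<close> times a vector of the form \<open>y - c z\<close>, so \<open>w\<^sub>t\<close> stays at distance at least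
  \<open>t \<cdot> dist (y, \<complex> z)\<close> from the orbit of \<open>z\<close>. Hence \<open>\<Psi>(z, w\<^sub>t) = O(t)\<close> as \<open>t \<rightarrow> 0\<^sup>+\<close>.\<close>

lemma norm_vector_scalar_mult: "norm (c *s (v::'a::real_normed_div_algebra ^ 'n)) = norm c * norm v"
  unfolding norm_vec_def by (simp add: L2_set_right_distrib norm_mult)

lemma cinner_add_left: "cinner (p + q) v = cinner p v + cinner q v"
  unfolding cinner_def by (simp add: sum.distrib algebra_simps)

lemma cinner_scalar_mult_left: "cinner (c *s p) v = c * cinner p v"
  unfolding cinner_def by (simp add: sum_distrib_left algebra_simps)

lemma sqrt_sum_sq_sub_abs_le:
  fixes c e :: real
  assumes "c \<noteq> 0"
  shows "\<bar>sqrt (c\<^sup>2 + e\<^sup>2) - \<bar>c\<bar>\<bar> \<le> e\<^sup>2 / \<bar>c\<bar>"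
proof -
  define r where "r = sqrt (c\<^sup>2 + e\<^sup>2)"
  have r_ge: "\<bar>c\<bar> \<le> r" unfolding r_def by (simp add: real_le_rsqrt)
  have "r - \<bar>c\<bar> = e\<^sup>2 / (r + \<bar>c\<bar>)"
    using assms r_ge by (simp add: r_def field_simps power2_eq_square)
  also have "\<dots> \<le> e\<^sup>2 / \<bar>c\<bar>"
    using assms r_ge by (intro divide_left_mono) auto
  finally show ?thesis using r_ge by (simp add: r_def)
qed

lemma cmod_real_perturbation_le:
  assumes "a \<in> \<real>" "b \<in> \<real>" "b \<noteq> 0 \<longrightarrow> a \<noteq> 0"
  shows "\<bar>cmod a - cmod (a + (\<i> * of_real t) * b)\<bar> \<le> t\<^sup>2 * ((cmod b)\<^sup>2 / cmod a)"
proof (cases "a = 0")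
  case False
  obtain ra rb where ab: "a = of_real ra" "b = of_real rb"
    using assms(1,2) by (auto elim!: Reals_cases)
  have "cmod (a + (\<i> * of_real t) * b) = sqrt (ra\<^sup>2 + (t * rb)\<^sup>2)"
    by (simp add: ab cmod_def)
  then have "\<bar>cmod a - cmod (a + (\<i> * of_real t) * b)\<bar> = \<bar>sqrt (ra\<^sup>2 + (t * rb)\<^sup>2) - \<bar>ra\<bar>\<bar>"
    by (simp add: ab)
  also have "\<dots> \<le> (t * rb)\<^sup>2 / \<bar>ra\<bar>"
    using False ab by (intro sqrt_sum_sq_sub_abs_le) simp
  finally show ?thesis by (simp add: ab power_mult_distrib)
qed (use assms in simp)

lemma infdist_complex_line_pos:
  fixes y z :: "complex ^ 'n"
  assumes "y \<notin> range (\<lambda>c. c *s z)"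
  obtains \<delta> where "\<delta> > 0" "\<And>c. \<delta> \<le> norm (y - c *s z)"
proof
  let ?L = "range (\<lambda>c. c *s z)"
  have "subspace ?L"
    unfolding subspace_def
  proof (intro conjI ballI allI)
    show "0 \<in> ?L" by (rule range_eqI[where x=0]) simp
  next
    fix p q assume "p \<in> ?L" "q \<in> ?L"
    then obtain c d where "p = c *s z" "q = d *s z" by auto
    then show "p + q \<in> ?L"
      by (intro range_eqI[where x="c + d"]) (simp add: vector_sadd_rdistrib)
  next
    fix r :: real and p assume "p \<in> ?L"
    then obtain c where "p = c *s z" by auto
    then show "r *\<^sub>R p \<in> ?L"
      by (intro range_eqI[where x="of_real r * c"]) (simp add: vec_eq_iff, simp add: scaleR_conv_of_real)
  qed
  then have "closure ?L = ?L" by (simp add: closed_subspace)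
  then show "infdist y ?L > 0"
    using assms in_closure_iff_infdist_zero[of ?L y] infdist_nonneg[of y ?L]
    by (simp add: order_less_le)
  show "infdist y ?L \<le> norm (y - c *s z)" for c
    using infdist_le[OF rangeI, of y "\<lambda>c. c *s z" c] by (simp add: dist_norm)
qed

lemma Psi_le_of_orbit_dist_ge:
  assumes "d > 0" "\<And>u. cmod u = 1 \<Longrightarrow> d \<le> norm (x - u *s y)"
  shows "Psi J X x y \<le> sqrt (\<Sum>j\<in>J. (cmod (cinner x (X j)) - cmod (cinner y (X j)))\<^sup>2) / d"
proof -
  have "d \<le> Inf {norm (x - u *s y) | u. cmod u = 1}"
    by (rule cInf_greatest) (use assms(2) in \<open>auto intro: exI[of _ 1]\<close>)
  then show ?thesis
    unfolding Psi_def using assms(1) by (intro divide_left_mono) (auto intro: sum_nonneg)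
qed

lemma not_stable_pr_near_if_Psi_vanishes:
  assumes "filterlim w (at z within - {u *s z | u. cmod u = 1}) F" "F \<noteq> bot"
    and "\<forall>\<^sub>F t in F. Psi J X z (w t) \<le> e t" "(e \<longlongrightarrow> 0) F"
  shows "\<not> stable_pr_near J X z"
proof
  assume "stable_pr_near J X z"
  then obtain C where "C > 0" and "C_stable_pr_near J X C z"
    unfolding stable_pr_near_def by blast
  moreover have "ereal (1/2) < 1" by (simp add: one_ereal_def)
  ultimately have "\<forall>\<^sub>F v in at z within - {u *s z | u. cmod u = 1}. ereal (1/2) < ereal (C * Psi J X z v)"
    unfolding C_stable_pr_near_def le_Liminf_iff by blast
  then have large: "\<forall>\<^sub>F t in F. 1/2 < C * Psi J X z (w t)"
    using assms(1) unfolding filterlim_iff by auto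
  have "((\<lambda>t. C * e t) \<longlongrightarrow> C * 0) F" by (intro tendsto_intros assms(4))
  from order_tendstoD(2)[OF this, of "1/2"] have "\<forall>\<^sub>F t in F. C * e t < 1/2" by simp
  with large assms(3) have "\<forall>\<^sub>F t in F. False"
  proof eventually_elim
    case (elim t)
    then show ?case using \<open>C > 0\<close> mult_left_mono[of "Psi J X z (w t)" "e t" C] by linarith
  qed
  with assms(2) show False by (simp add: eventually_False)
qed

lemma orbit_dist_imaginary_perturbation_ge:
  fixes y z :: "complex ^ 'n"
  assumes "\<And>c. \<delta> \<le> norm (y - c *s z)" "cmod u = 1" "t \<noteq> 0"
  shows "\<bar>t\<bar> * \<delta> \<le> norm (z - u *s (z + (\<i> * of_real t) *s y))"
proof -
  define c where "c = (1 - u) / (u * \<i> * of_real t)"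
  have "u \<noteq> 0" using assms(2) by auto
  then have eq: "z - u *s (z + (\<i> * of_real t) *s y) = - (u * \<i> * of_real t) *s (y - c *s z)"
    using assms(3) by (simp add: c_def vec_eq_iff field_simps)
  have "norm (z - u *s (z + (\<i> * of_real t) *s y)) = \<bar>t\<bar> * norm (y - c *s z)"
    unfolding eq norm_vector_scalar_mult norm_minus_cancel using assms(2) by (simp add: norm_mult)
  then show ?thesis using assms(1)[of c] by (simp add: mult_left_mono)
qed

lemma Theta_dist_real_perturbation_le:
  fixes z y :: "complex ^ 'n"
  assumes real: "\<forall>j\<in>J. cinner z (X j) \<in> \<real> \<and> cinner y (X j) \<in> \<real>"
    and nonzero: "\<forall>j\<in>J. cinner y (X j) \<noteq> 0 \<longrightarrow> cinner z (X j) \<noteq> 0"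
  shows "sqrt (\<Sum>j\<in>J. (cmod (cinner z (X j)) - cmod (cinner (z + (\<i> * of_real t) *s y) (X j)))\<^sup>2)
    \<le> t\<^sup>2 * sqrt (\<Sum>j\<in>J. ((cmod (cinner y (X j)))\<^sup>2 / cmod (cinner z (X j)))\<^sup>2)"
proof -
  let ?w = "z + (\<i> * of_real t) *s y"
  \<comment> \<open>if \<open>cinner z (X j) = 0\<close> then \<open>cinner y (X j) = 0\<close>, and the summand is \<open>0 / 0 = 0\<close>\<close>
  let ?q = "\<lambda>j. (cmod (cinner y (X j)))\<^sup>2 / cmod (cinner z (X j))"
  have "(\<Sum>j\<in>J. (cmod (cinner z (X j)) - cmod (cinner ?w (X j)))\<^sup>2) \<le> (\<Sum>j\<in>J. (t\<^sup>2 * ?q j)\<^sup>2)"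
  proof (rule sum_mono)
    fix j assume "j \<in> J"
    then have "\<bar>cmod (cinner z (X j)) - cmod (cinner ?w (X j))\<bar> \<le> t\<^sup>2 * ?q j"
      using cmod_real_perturbation_le[of "cinner z (X j)" "cinner y (X j)" t] real nonzero
      by (simp add: cinner_add_left cinner_scalar_mult_left)
    then show "(cmod (cinner z (X j)) - cmod (cinner ?w (X j)))\<^sup>2 \<le> (t\<^sup>2 * ?q j)\<^sup>2"
      using power_mono[OF _ abs_ge_zero, of _ _ 2] by fastforce
  qed
  also have "\<dots> = (t\<^sup>2)\<^sup>2 * (\<Sum>j\<in>J. (?q j)\<^sup>2)"
    by (simp only: sum_distrib_left power_mult_distrib)
  finally have "sqrt (\<Sum>j\<in>J. (cmod (cinner z (X j)) - cmod (cinner ?w (X j)))\<^sup>2)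
      \<le> sqrt ((t\<^sup>2)\<^sup>2 * (\<Sum>j\<in>J. (?q j)\<^sup>2))"
    by (rule real_sqrt_le_mono)
  then show ?thesis by (simp only: real_sqrt_mult real_sqrt_abs abs_power2)
qed

lemma imaginary_perturbation_tendsto_off_orbit:
  fixes z y :: "complex ^ 'n"
  assumes indep: "\<forall>a b. a *s z + b *s y = 0 \<longrightarrow> a = 0 \<and> b = 0"
  shows "filterlim (\<lambda>t. z + (\<i> * of_real t) *s y) (at z within - {u *s z | u. cmod u = 1})
    (at_right 0)"
proof (rule filterlim_at_withinI)
  have "(\<lambda>t. z + (\<i> * of_real t) *s y) = (\<lambda>t. z + t *\<^sub>R (\<i> *s y))"
    by (rule ext) (simp add: vec_eq_iff, simp add: scaleR_conv_of_real)
  moreover have "((\<lambda>t. z + t *\<^sub>R (\<i> *s y)) \<longlongrightarrow> z + 0 *\<^sub>R (\<i> *s y)) (at_right 0)"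
    by (intro tendsto_intros)
  ultimately show "((\<lambda>t. z + (\<i> * of_real t) *s y) \<longlongrightarrow> z) (at_right 0)" by simp
next
  have off_orbit: "z + (\<i> * of_real t) *s y \<notin> {u *s z | u. cmod u = 1}" if "t > 0" for t
  proof
    assume "z + (\<i> * of_real t) *s y \<in> {u *s z | u. cmod u = 1}"
    then obtain u where "(1 - u) *s z + (\<i> * of_real t) *s y = 0"
      by (auto simp: vec_eq_iff algebra_simps)
    from indep[rule_format, OF this] \<open>t > 0\<close> show False by simp
  qed
  have "z \<in> {u *s z | u. cmod u = 1}" by (auto intro!: exI[of _ 1])
  with off_orbit show "\<forall>\<^sub>F t in at_right 0.
      z + (\<i> * of_real t) *s y \<in> - {u *s z | u. cmod u = 1} - {z}"
    using eventually_at_right_less[of 0] by (auto elim!: eventually_mono)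
qed

lemma not_stable_pr_near_of_real_coefficients:
  fixes z y :: "complex ^ 'n"
  assumes real: "\<forall>j\<in>J. cinner z (X j) \<in> \<real> \<and> cinner y (X j) \<in> \<real>"
    and nonzero: "\<forall>j\<in>J. cinner y (X j) \<noteq> 0 \<longrightarrow> cinner z (X j) \<noteq> 0"
    and indep: "\<forall>a b. a *s z + b *s y = 0 \<longrightarrow> a = 0 \<and> b = 0"
  shows "\<not> stable_pr_near J X z"
proof -
  have "y \<notin> range (\<lambda>c. c *s z)"
  proof
    assume "y \<in> range (\<lambda>c. c *s z)"
    then obtain c where "y = c *s z" by auto
    then have "c *s z + (-1) *s y = 0" by (simp add: vec_eq_iff)
    from indep[rule_format, OF this] show False by simp
  qed
  then obtain \<delta> where "\<delta> > 0" and \<delta>: "\<And>c. \<delta> \<le> norm (y - c *s z)"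
    by (rule infdist_complex_line_pos) auto
  define K where "K = sqrt (\<Sum>j\<in>J. ((cmod (cinner y (X j)))\<^sup>2 / cmod (cinner z (X j)))\<^sup>2)"
  have "Psi J X z (z + (\<i> * of_real t) *s y) \<le> t * (K / \<delta>)" if "t > 0" for t
  proof -
    have "Psi J X z (z + (\<i> * of_real t) *s y) \<le> t\<^sup>2 * K / (t * \<delta>)"
      using \<open>t > 0\<close> \<open>\<delta> > 0\<close> orbit_dist_imaginary_perturbation_ge[OF \<delta>, of _ t]
        Theta_dist_real_perturbation_le[OF real nonzero, of t]
      by (intro order_trans[OF Psi_le_of_orbit_dist_ge divide_right_mono]) (auto simp: K_def)
    also have "\<dots> = t * (K / \<delta>)" using \<open>t > 0\<close> by (simp add: power2_eq_square)
    finally show ?thesis .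
  qed
  then have "\<forall>\<^sub>F t in at_right 0. Psi J X z (z + (\<i> * of_real t) *s y) \<le> t * (K / \<delta>)"
    using eventually_at_right_less[of 0] by (auto elim!: eventually_mono)
  moreover have "((\<lambda>t. t * (K / \<delta>)) \<longlongrightarrow> 0) (at_right 0)"
    by (rule tendsto_mult_left_zero) (rule tendsto_ident_at)
  ultimately show ?thesis
    by (rule not_stable_pr_near_if_Psi_vanishes[OF imaginary_perturbation_tendsto_off_orbit[OF indep]
          trivial_limit_at_right_real])
qed

lemma finite_avoid_real_zeros:
  fixes a b :: "'j \<Rightarrow> real"
  assumes "finite J"
  obtains s where "\<forall>j\<in>J. b j \<noteq> 0 \<longrightarrow> a j + s * b j \<noteq> 0"
proof -
  obtain s where s: "s \<notin> (\<lambda>j. - a j / b j) ` J"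
    using ex_new_if_finite[OF infinite_UNIV_char_0] assms by blast
  have "a j + s * b j \<noteq> 0" if "j \<in> J" "b j \<noteq> 0" for j
  proof
    assume "a j + s * b j = 0"
    then have "s = - a j / b j" using \<open>b j \<noteq> 0\<close> by (simp add: field_simps)
    with s \<open>j \<in> J\<close> show False by auto
  qed
  then show thesis using that by blast
qed

theorem theorem4p3:
  fixes J :: "'j set" and X :: "'j \<Rightarrow> complex ^ 'n" and x y :: "complex ^ 'n"
  assumes "CARD('n) \<ge> 2"
    and "finite_frame J X"
    and "\<forall>a b. a *s x + b *s y = 0 \<longrightarrow> a = 0 \<and> b = 0"
    and "\<forall>j\<in>J. cinner x (X j) \<in> \<real> \<and> cinner y (X j) \<in> \<real>"
  shows "\<exists>z. (\<exists>a b. z = a *s x + b *s y) \<and> \<not> stable_pr_near J X z"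
proof -
  have "finite J" using assms(2) unfolding finite_frame_def by blast
  then obtain s where s: "\<forall>j\<in>J. Re (cinner y (X j)) \<noteq> 0 \<longrightarrow>
      Re (cinner x (X j)) + s * Re (cinner y (X j)) \<noteq> 0"
    by (rule finite_avoid_real_zeros)
  define z where "z = x + of_real s *s y"
  have inner_z: "cinner z (X j) = of_real (Re (cinner x (X j)) + s * Re (cinner y (X j)))"
    if "j \<in> J" for j
    using assms(4) that by (auto simp: z_def cinner_add_left cinner_scalar_mult_left of_real_Re)
  then have "\<forall>j\<in>J. cinner z (X j) \<in> \<real> \<and> cinner y (X j) \<in> \<real>"
    using assms(4) by auto
  moreover have "\<forall>j\<in>J. cinner y (X j) \<noteq> 0 \<longrightarrow> cinner z (X j) \<noteq> 0"
    using s inner_z assms(4) by (auto simp: complex_is_Real_iff complex_eq_iff)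
  moreover have "\<forall>a b. a *s z + b *s y = 0 \<longrightarrow> a = 0 \<and> b = 0"
  proof (intro allI impI)
    fix a b assume "a *s z + b *s y = 0"
    then have "a *s x + (a * of_real s + b) *s y = 0"
      by (simp add: z_def vec_eq_iff algebra_simps)
    from assms(3)[rule_format, OF this] show "a = 0 \<and> b = 0" by auto
  qed
  ultimately have "\<not> stable_pr_near J X z"
    by (rule not_stable_pr_near_of_real_coefficients)
  moreover have "z = 1 *s x + of_real s *s y" by (simp add: z_def)
  ultimately show ?thesis by blast
qed

end
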